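(* Let $W$ be a nonempty closed subset of $\mathbb{R}$, let $\alpha,\beta\in\mathrm{Aut}(W)$, $a\in\mathrm{Fix}_W(\alpha)$, $b\in\mathrm{Fix}_W(\beta)$. Suppose $a<b$, $\mathrm{Fix}_W(\alpha)\cap(a,b]=\emptyset$ and $\mathrm{Fix}_W(\beta)\cap[a,b)=\emptyset$. Then $\langle\alpha,\beta\rangle$ contains a nonabelian free subsemigroup.
   Context: $\mathrm{Aut}(W)$ is the group of order preserving bijections of $W$ (with the order induced from $\mathbb{R}$). $\mathrm{Fix}_W(g)$ is the set of points of $W$ fixed by $g$. *)

theory Defs
  imports "HOL-Analysis.Analysis"
begin

definition Aut :: "real set \<Rightarrow> (real \<Rightarrow> real) set" where
  "Aut W = {f. bij_betw f W W \<and> strict_mono_on W f}"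

definition Fix :: "real set \<Rightarrow> (real \<Rightarrow> real) \<Rightarrow> real set" where
  "Fix W g = {x \<in> W. g x = x}"

text \<open>Elements of Aut(W) are represented canonically as maps that are the identity off W.\<close>
definition on_W :: "real set \<Rightarrow> (real \<Rightarrow> real) \<Rightarrow> real \<Rightarrow> real" where
  "on_W W f = (\<lambda>x. if x \<in> W then f x else x)"

inductive_set gen_group :: "real set \<Rightarrow> (real \<Rightarrow> real) \<Rightarrow> (real \<Rightarrow> real) \<Rightarrow> (real \<Rightarrow> real) set"
  for W :: "real set" and \<alpha> \<beta> :: "real \<Rightarrow> real" where
  gen_id: "on_W W id \<in> gen_group W \<alpha> \<beta>"
| gen_a: "g \<in> gen_group W \<alpha> \<beta> \<Longrightarrow> on_W W (\<alpha> \<circ> g) \<in> gen_group W \<alpha> \<beta>"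
| gen_a_inv: "g \<in> gen_group W \<alpha> \<beta> \<Longrightarrow> on_W W (inv_into W \<alpha> \<circ> g) \<in> gen_group W \<alpha> \<beta>"
| gen_b: "g \<in> gen_group W \<alpha> \<beta> \<Longrightarrow> on_W W (\<beta> \<circ> g) \<in> gen_group W \<alpha> \<beta>"
| gen_b_inv: "g \<in> gen_group W \<alpha> \<beta> \<Longrightarrow> on_W W (inv_into W \<beta> \<circ> g) \<in> gen_group W \<alpha> \<beta>"

fun word_eval :: "('a \<Rightarrow> 'a) \<Rightarrow> ('a \<Rightarrow> 'a) \<Rightarrow> bool list \<Rightarrow> 'a \<Rightarrow> 'a" where
  "word_eval g h [] = id"
| "word_eval g h (c # w) = (if c then g else h) \<circ> word_eval g h w"

definition free_semigroup_pair :: "('a \<Rightarrow> 'a) \<Rightarrow> ('a \<Rightarrow> 'a) \<Rightarrow> bool" where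
  "free_semigroup_pair g h \<longleftrightarrow>
     (\<forall>u v. u \<noteq> [] \<longrightarrow> v \<noteq> [] \<longrightarrow> word_eval g h u = word_eval g h v \<longrightarrow> u = v)"

end

theory Submission
  imports Defs
begin

text \<open>Replacing \<open>\<alpha>\<close> by its inverse if necessary gives an automorphism \<open>f\<close> fixing \<open>a\<close> with
  \<open>f b < b\<close>; since \<open>W\<close> is closed, the direction of displacement cannot change on an interval
  without fixed points, so \<open>f\<close> pushes all of \<open>W \<inter> (a,b]\<close> down.  Closedness also makes the
  infimum of the orbit \<open>f\<^sup>n b\<close> a point of \<open>W\<close>, which must be \<open>a\<close>, so some \<open>g = f\<^sup>n\<close> satisfies
  \<open>g b < h a\<close>, where \<open>h\<close> is \<open>\<beta>\<close> or its inverse, chosen with \<open>h b = b\<close> and \<open>a < h a\<close>.  Then \<open>g\<close>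
  maps \<open>W \<inter> [a,b]\<close> into \<open>[a, g b]\<close> and \<open>h\<close> maps it into \<open>[h a, b]\<close>; these sets are disjoint,
  and the ping-pong argument shows that \<open>g\<close> and \<open>h\<close> generate a free semigroup.\<close>

lemma Aut_apply: "\<sigma> \<in> Aut W \<Longrightarrow> x \<in> W \<Longrightarrow> \<sigma> x \<in> W"
  unfolding Aut_def by (auto dest: bij_betw_apply)

lemma Aut_less_iff: "\<sigma> \<in> Aut W \<Longrightarrow> x \<in> W \<Longrightarrow> y \<in> W \<Longrightarrow> \<sigma> x < \<sigma> y \<longleftrightarrow> x < y"
  unfolding Aut_def by (auto simp: strict_mono_on_less)

lemma Aut_le_iff: "\<sigma> \<in> Aut W \<Longrightarrow> x \<in> W \<Longrightarrow> y \<in> W \<Longrightarrow> \<sigma> x \<le> \<sigma> y \<longleftrightarrow> x \<le> y"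
  unfolding Aut_def by (auto simp: strict_mono_on_less_eq)

lemma Aut_surj: "\<sigma> \<in> Aut W \<Longrightarrow> y \<in> W \<Longrightarrow> \<exists>x\<in>W. \<sigma> x = y"
  unfolding Aut_def by (metis (no_types, lifting) bij_betw_def imageE mem_Collect_eq)

lemma Aut_inv_into_left: "\<sigma> \<in> Aut W \<Longrightarrow> x \<in> W \<Longrightarrow> inv_into W \<sigma> (\<sigma> x) = x"
  unfolding Aut_def by (auto intro: bij_betw_inv_into_left)

lemma Aut_inv_into_right: "\<sigma> \<in> Aut W \<Longrightarrow> x \<in> W \<Longrightarrow> \<sigma> (inv_into W \<sigma> x) = x"
  unfolding Aut_def by (auto intro: bij_betw_inv_into_right)

lemma Aut_inv_into:
  assumes "\<sigma> \<in> Aut W"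
  shows "inv_into W \<sigma> \<in> Aut W"
proof -
  have bij: "bij_betw (inv_into W \<sigma>) W W"
    using assms unfolding Aut_def by (auto intro: bij_betw_inv_into)
  have "strict_mono_on W (inv_into W \<sigma>)"
  proof (rule strict_mono_onI)
    fix x y assume "x \<in> W" "y \<in> W" "x < y"
    then show "inv_into W \<sigma> x < inv_into W \<sigma> y"
      using assms bij_betw_apply[OF bij]
      by (metis Aut_inv_into_right Aut_less_iff)
  qed
  then show ?thesis using bij unfolding Aut_def by simp
qed

lemma Aut_comp: "\<sigma> \<in> Aut W \<Longrightarrow> \<tau> \<in> Aut W \<Longrightarrow> \<sigma> \<circ> \<tau> \<in> Aut W"
  unfolding Aut_def by (auto intro: bij_betw_trans monotone_on_o dest: bij_betw_imp_surj_on)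

lemma Aut_funpow: "\<sigma> \<in> Aut W \<Longrightarrow> \<sigma> ^^ n \<in> Aut W"
proof (induction n)
  case 0
  show ?case unfolding Aut_def by (simp add: strict_mono_on_ident bij_betw_id[unfolded id_def])
next
  case (Suc n)
  then show ?case by (metis Aut_comp funpow.simps(2))
qed

lemma Aut_image_interval:
  "\<sigma> \<in> Aut W \<Longrightarrow> x \<in> W \<Longrightarrow> y \<in> W \<Longrightarrow> \<sigma> ` (W \<inter> {x..y}) \<subseteq> W \<inter> {\<sigma> x..\<sigma> y}"
  by (auto simp: Aut_apply Aut_le_iff)

lemma Aut_inv_into_less_iff:
  assumes "\<sigma> \<in> Aut W" "x \<in> W"
  shows "inv_into W \<sigma> x < x \<longleftrightarrow> x < \<sigma> x" and "x < inv_into W \<sigma> x \<longleftrightarrow> \<sigma> x < x"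
  using Aut_less_iff[OF assms(1) _ assms(2), of "inv_into W \<sigma> x"]
    Aut_less_iff[OF assms(1) assms(2), of "inv_into W \<sigma> x"]
    Aut_inv_into_right[OF assms] Aut_apply[OF Aut_inv_into assms(2)] assms(1)
  by auto

lemma Fix_inv_into: "\<sigma> \<in> Aut W \<Longrightarrow> Fix W (inv_into W \<sigma>) = Fix W \<sigma>"
  unfolding Fix_def by (metis Aut_inv_into_left Aut_inv_into_right)

lemma Aut_or_inverse_moves_down:
  assumes "\<sigma> \<in> Aut W" "x \<in> W" "\<sigma> x \<noteq> x"
  obtains \<tau> where "\<tau> \<in> {\<sigma>, inv_into W \<sigma>}" "\<tau> \<in> Aut W" "Fix W \<tau> = Fix W \<sigma>" "\<tau> x < x"
  using assms Aut_inv_into Fix_inv_into Aut_inv_into_less_iff(1)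
  by (metis insertCI linorder_neq_iff)

lemma Aut_or_inverse_moves_up:
  assumes "\<sigma> \<in> Aut W" "x \<in> W" "\<sigma> x \<noteq> x"
  obtains \<tau> where "\<tau> \<in> {\<sigma>, inv_into W \<sigma>}" "\<tau> \<in> Aut W" "Fix W \<tau> = Fix W \<sigma>" "x < \<tau> x"
  using assms Aut_inv_into Fix_inv_into Aut_inv_into_less_iff(2)
  by (metis insertCI linorder_neq_iff)

text \<open>The supremum of the points of \<open>W \<inter> [x,y]\<close> moved up lies in \<open>W\<close> because \<open>W\<close> is closed,
  and neither direction of displacement is possible there.\<close>
lemma Aut_moves_down_leftwards:
  assumes "closed W" and \<sigma>: "\<sigma> \<in> Aut W" and W: "x \<in> W" "y \<in> W" and "x \<le> y"
    and nofix: "Fix W \<sigma> \<inter> {x..y} = {}" and "\<sigma> y < y"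
  shows "\<sigma> x < x"
proof (rule ccontr)
  assume "\<not> \<sigma> x < x"
  moreover have "\<sigma> x \<noteq> x" using nofix W \<open>x \<le> y\<close> unfolding Fix_def by auto
  ultimately have "x < \<sigma> x" by simp
  define S where "S = {z \<in> W \<inter> {x..y}. z < \<sigma> z}"
  define s where "s = Sup S"
  have "x \<in> S" using W \<open>x \<le> y\<close> \<open>x < \<sigma> x\<close> unfolding S_def by auto
  have bdd: "bdd_above S" unfolding S_def by (auto intro: bdd_aboveI[of _ y])
  have upper: "z \<le> s" if "z \<in> S" for z unfolding s_def using that bdd by (rule cSup_upper)
  have "s \<in> W" unfolding s_def
    using closed_subset_contains_Sup[OF \<open>closed W\<close> _ _ bdd] \<open>x \<in> S\<close> by (auto simp: S_def)
  moreover have "x \<le> s" "s \<le> y"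
    using upper[OF \<open>x \<in> S\<close>] \<open>x \<in> S\<close> unfolding s_def by (auto intro: cSup_least simp: S_def)
  ultimately have "\<sigma> s \<noteq> s" using nofix unfolding Fix_def by auto
  then consider "\<sigma> s < s" | "s < \<sigma> s" by linarith
  then show False
  proof cases
    case 1
    then obtain z where "z \<in> S" "\<sigma> s < z"
      using less_cSup_iff[OF _ bdd] \<open>x \<in> S\<close> unfolding s_def by blast
    then have "\<sigma> s < \<sigma> z" unfolding S_def by auto
    then have "s < z" using Aut_less_iff[OF \<sigma> \<open>s \<in> W\<close>] \<open>z \<in> S\<close> unfolding S_def by blast
    then show False using upper[OF \<open>z \<in> S\<close>] by simp
  next
    case 2
    have "\<sigma> s \<in> W" using Aut_apply[OF \<sigma> \<open>s \<in> W\<close>] .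
    moreover have "\<sigma> s \<le> y"
      using Aut_le_iff[OF \<sigma> \<open>s \<in> W\<close> \<open>y \<in> W\<close>] \<open>s \<le> y\<close> \<open>\<sigma> y < y\<close> by simp
    moreover have "\<sigma> (\<sigma> s) > \<sigma> s" using Aut_less_iff[OF \<sigma> \<open>s \<in> W\<close> \<open>\<sigma> s \<in> W\<close>] 2 by simp
    ultimately have "\<sigma> s \<in> S" using 2 \<open>x \<le> s\<close> unfolding S_def by auto
    then show False using upper 2 by fastforce
  qed
qed

text \<open>If the orbit stayed above \<open>p\<close>, its infimum \<open>c\<close> would be a point of \<open>W \<inter> (a,b]\<close>; the
  preimage of \<open>c\<close> lies above \<open>c\<close>, and an orbit point below that preimage is mapped below \<open>c\<close>.\<close>
lemma Aut_orbit_eventually_below: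
  assumes "closed W" and f: "f \<in> Aut W" and W: "a \<in> W" "b \<in> W" and "a \<le> b" and "f a = a"
    and down: "\<And>z. z \<in> W \<Longrightarrow> a < z \<Longrightarrow> z \<le> b \<Longrightarrow> f z < z" and "a < p"
  shows "\<exists>n. (f ^^ n) b < p"
proof (rule ccontr)
  assume "\<not> (\<exists>n. (f ^^ n) b < p)"
  then have above: "p \<le> (f ^^ n) b" for n by (simp add: not_less)
  have "f b \<le> b" using down[OF \<open>b \<in> W\<close>] \<open>f a = a\<close> \<open>a \<le> b\<close> by force
  then have f_into: "f ` (W \<inter> {a..b}) \<subseteq> W \<inter> {a..b}"
    using Aut_image_interval[OF f W] \<open>f a = a\<close> by auto
  have orbit: "(f ^^ n) b \<in> W \<inter> {a..b}" for n
    by (induction n) (use W \<open>a \<le> b\<close> f_into[unfolded image_subset_iff] in auto)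
  define T where "T = range (\<lambda>n. (f ^^ n) b)"
  have bdd: "bdd_below T" unfolding T_def using orbit by (auto intro: bdd_belowI[of _ a])
  have T_closed: "f t \<in> T" if "t \<in> T" for t
    using that unfolding T_def by (auto simp: image_iff intro: exI[of _ "Suc _"])
  define c where "c = Inf T"
  have "c \<in> W" unfolding c_def
    using closed_subset_contains_Inf[OF \<open>closed W\<close> _ _ bdd] orbit by (auto simp: T_def)
  have "p \<le> c" unfolding c_def T_def using above by (auto intro: cInf_greatest)
  have "b \<in> T" unfolding T_def by (metis funpow_0 rangeI)
  then have "c \<le> b" unfolding c_def using bdd by (rule cInf_lower)
  obtain d where "d \<in> W" "f d = c" using Aut_surj[OF f \<open>c \<in> W\<close>] by blast
  have "c < d"
  proof (rule ccontr)
    assume "\<not> c < d"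
    moreover have "a < d"
      using Aut_less_iff[OF f \<open>a \<in> W\<close> \<open>d \<in> W\<close>] \<open>f a = a\<close> \<open>f d = c\<close> \<open>a < p\<close> \<open>p \<le> c\<close> by simp
    ultimately show False using down[OF \<open>d \<in> W\<close>] \<open>f d = c\<close> \<open>c \<le> b\<close> by fastforce
  qed
  then obtain t where "t \<in> T" "t < d"
    using cInf_less_iff[OF _ bdd] unfolding c_def T_def by auto
  then have "f t < c" using Aut_less_iff[OF f _ \<open>d \<in> W\<close>] orbit \<open>f d = c\<close> unfolding T_def by auto
  then show False using T_closed[OF \<open>t \<in> T\<close>] cInf_lower[OF _ bdd] c_def by fastforce
qed

lemma inj_on_W_Aut:
  assumes "\<sigma> \<in> Aut W"
  shows "inj (on_W W \<sigma>)"
proof (rule injI)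
  fix x y assume eq: "on_W W \<sigma> x = on_W W \<sigma> y"
  have "inj_on \<sigma> W" using assms unfolding Aut_def bij_betw_def by simp
  then show "x = y"
    using eq Aut_apply[OF assms] unfolding on_W_def by (auto split: if_splits dest: inj_onD)
qed

lemma gen_group_on_W_funpow:
  assumes "f \<in> {\<alpha>, inv_into W \<alpha>, \<beta>, inv_into W \<beta>}" and "f \<in> Aut W"
  shows "on_W W (f ^^ n) \<in> gen_group W \<alpha> \<beta>"
proof (induction n)
  case 0
  show ?case using gen_group.gen_id by (simp add: id_def)
next
  case (Suc n)
  have "on_W W (f \<circ> on_W W (f ^^ n)) \<in> gen_group W \<alpha> \<beta>"
    using assms(1) gen_group.intros(2-5)[OF Suc] by blast
  moreover have "on_W W (f \<circ> on_W W (f ^^ n)) = on_W W (f \<circ> f ^^ n)"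
    using Aut_apply[OF Aut_funpow[OF assms(2)]] by (auto simp: on_W_def)
  ultimately show ?case by (simp only: funpow.simps(2))
qed

lemma free_semigroup_pair_pingpong:
  assumes "inj g" "inj h" and disj: "A \<inter> B = {}" and "A \<noteq> {}" "B \<noteq> {}"
    and g: "g ` (A \<union> B) \<subseteq> A" and h: "h ` (A \<union> B) \<subseteq> B"
  shows "free_semigroup_pair g h"
proof -
  have lands: "word_eval g h (c # w) x \<in> (if c then A else B)" if "x \<in> A \<union> B" for c w x
  proof -
    have "word_eval g h w x \<in> A \<union> B" using that by (induction w) (use g h in auto)
    then show ?thesis using g h by auto
  qed
  have off: "\<exists>x \<in> A \<union> B. x \<notin> (if c then A else B)" for c
    using disj \<open>A \<noteq> {}\<close> \<open>B \<noteq> {}\<close> by auto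
  have "u = v" if "word_eval g h u = word_eval g h v" for u v
    using that
  proof (induction u v rule: list_induct2')
    case 1
    then show ?case by simp
  next
    case (2 c u)
    from off obtain x where "x \<in> A \<union> B" "x \<notin> (if c then A else B)" by blast
    then show ?case using lands[of x c u] 2 by (metis id_apply word_eval.simps(1))
  next
    case (3 d w)
    from off obtain x where "x \<in> A \<union> B" "x \<notin> (if d then A else B)" by blast
    then show ?case using lands[of x d w] 3 by (metis id_apply word_eval.simps(1))
  next
    case (4 c u d w)
    show ?case
    proof (cases "c = d")
      case True
      have "inj (if c then g else h)" using \<open>inj g\<close> \<open>inj h\<close> by simp
      then have "word_eval g h u = word_eval g h w"
        using "4.prems" True by (simp add: fun_eq_iff inj_eq)
      then show ?thesis using "4.IH" True by simp
    next
      case False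
      from \<open>A \<noteq> {}\<close> obtain x where "x \<in> A" by blast
      moreover have "word_eval g h (c # u) x = word_eval g h (d # w) x"
        using "4.prems" by (rule fun_cong)
      ultimately show ?thesis
        using lands[of x c u] lands[of x d w] False disj by (cases c; cases d) auto
    qed
  qed
  then show ?thesis unfolding free_semigroup_pair_def by blast
qed

lemma free_semigroup_pair_on_W:
  assumes g: "g \<in> Aut W" and h: "h \<in> Aut W" and W: "a \<in> W" "b \<in> W" and "a \<le> b"
    and "g a = a" "h b = b" "g b < h a"
  shows "free_semigroup_pair (on_W W g) (on_W W h)"
proof -
  define A where "A = W \<inter> {a..g b}"
  define B where "B = W \<inter> {h a..b}"
  have "a \<le> g b" "h a \<le> b"
    using Aut_le_iff[OF g W] Aut_le_iff[OF h W] \<open>a \<le> b\<close> \<open>g a = a\<close> \<open>h b = b\<close> by auto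
  then have AB: "A \<union> B \<subseteq> W \<inter> {a..b}" unfolding A_def B_def using \<open>g b < h a\<close> by auto
  have "on_W W g ` (A \<union> B) = g ` (A \<union> B)" "on_W W h ` (A \<union> B) = h ` (A \<union> B)"
    using AB by (auto simp: on_W_def intro!: image_cong)
  moreover have "g ` (A \<union> B) \<subseteq> A"
    using subset_trans[OF image_mono[OF AB] Aut_image_interval[OF g W]] \<open>g a = a\<close>
    by (simp add: A_def)
  moreover have "h ` (A \<union> B) \<subseteq> B"
    using subset_trans[OF image_mono[OF AB] Aut_image_interval[OF h W]] \<open>h b = b\<close>
    by (simp add: B_def)
  moreover have "A \<inter> B = {}" "A \<noteq> {}" "B \<noteq> {}"
    using \<open>g b < h a\<close> \<open>a \<le> g b\<close> \<open>h a \<le> b\<close> W unfolding A_def B_def by auto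
  ultimately show ?thesis
    using free_semigroup_pair_pingpong[OF inj_on_W_Aut[OF g] inj_on_W_Aut[OF h]] by simp
qed

theorem lemma4p3:
  fixes W :: "real set" and \<alpha> \<beta> :: "real \<Rightarrow> real" and a b :: real
  assumes "W \<noteq> {}" and "closed W"
    and "\<alpha> \<in> Aut W" and "\<beta> \<in> Aut W"
    and "a \<in> Fix W \<alpha>" and "b \<in> Fix W \<beta>"
    and "a < b"
    and "Fix W \<alpha> \<inter> {a<..b} = {}"
    and "Fix W \<beta> \<inter> {a..<b} = {}"
  shows "\<exists>g \<in> gen_group W \<alpha> \<beta>. \<exists>h \<in> gen_group W \<alpha> \<beta>. free_semigroup_pair g h"
proof -
  have W: "a \<in> W" "b \<in> W" using assms(5,6) unfolding Fix_def by auto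
  have "\<alpha> b \<noteq> b" "\<beta> a \<noteq> a" using W assms(7-9) unfolding Fix_def by auto
  obtain f where f: "f \<in> {\<alpha>, inv_into W \<alpha>}" "f \<in> Aut W" "Fix W f = Fix W \<alpha>" "f b < b"
    using Aut_or_inverse_moves_down[OF assms(3) W(2) \<open>\<alpha> b \<noteq> b\<close>] by metis
  obtain h where h: "h \<in> {\<beta>, inv_into W \<beta>}" "h \<in> Aut W" "Fix W h = Fix W \<beta>" "a < h a"
    using Aut_or_inverse_moves_up[OF assms(4) W(1) \<open>\<beta> a \<noteq> a\<close>] by metis
  have "f a = a" "h b = b" using f(3) h(3) assms(5,6) unfolding Fix_def by auto
  have down: "f z < z" if "z \<in> W" "a < z" "z \<le> b" for z
  proof -
    have "Fix W f \<inter> {z..b} = {}" using f(3) assms(8) \<open>a < z\<close> by auto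
    then show ?thesis by (rule Aut_moves_down_leftwards[OF assms(2) f(2) that(1) W(2) that(3) _ f(4)])
  qed
  obtain n where "(f ^^ n) b < h a"
    using Aut_orbit_eventually_below[OF assms(2) f(2) W _ \<open>f a = a\<close> down h(4)] assms(7) by auto
  moreover have "(f ^^ n) a = a" using \<open>f a = a\<close> by (induction n) auto
  ultimately have "free_semigroup_pair (on_W W (f ^^ n)) (on_W W h)"
    using free_semigroup_pair_on_W[OF Aut_funpow[OF f(2)] h(2) W] assms(7) \<open>h b = b\<close> by auto
  moreover have "on_W W (f ^^ n) \<in> gen_group W \<alpha> \<beta>"
    using gen_group_on_W_funpow[OF _ f(2)] f(1) by auto
  moreover have "on_W W h \<in> gen_group W \<alpha> \<beta>"
    using gen_group_on_W_funpow[OF _ h(2), of _ _ 1] h(1) by auto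
  ultimately show ?thesis by blast
qed

end
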